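(* Let $X$ be a super $X$-set parameter and let $G$ be a graph. If an $X$-set $S$ of $G$ is a cut-vertex of $\mathfrak{X}(G)$, then $S=V(G)$.
   Context: All graphs are finite, simple, undirected, with nonempty vertex set. A super $X$-set parameter $X$ assigns to each graph $G$ a family of subsets of $V(G)$, called the $X$-sets of $G$, such that: every graph isomorphism maps $X$-sets to $X$-sets; every graph has at least one $X$-set; and (Superset) if $S$ is an $X$-set of $G$ and $S\subseteq S'\subseteq V(G)$, then $S'$ is an $X$-set of $G$. The $X$-TAR graph $\mathfrak{X}(G)$ has as vertices the $X$-sets of $G$, with $S_1S_2$ an edge iff $|S_1\ominus S_2|=1$ ($\ominus$ = symmetric difference). *)

theory Defs
  imports Main
begin

text \<open>A graph is a pair (V, E): V its vertex set, E its set of edges, each edge a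
two-element subset of V.  Graphs are finite, simple, undirected, with nonempty vertex set.\<close>

type_synonym 'a graph = "'a set \<times> 'a set set"

definition verts :: "'a graph \<Rightarrow> 'a set" where
  "verts G = fst G"

definition edges :: "'a graph \<Rightarrow> 'a set set" where
  "edges G = snd G"

definition is_graph :: "'a graph \<Rightarrow> bool" where
  "is_graph G \<longleftrightarrow> finite (verts G) \<and> verts G \<noteq> {} \<and>
     (\<forall>e\<in>edges G. e \<subseteq> verts G \<and> card e = 2)"

definition graph_iso :: "('a \<Rightarrow> 'b) \<Rightarrow> 'a graph \<Rightarrow> 'b graph \<Rightarrow> bool" where
  "graph_iso f G H \<longleftrightarrow> bij_betw f (verts G) (verts H) \<and>
     (\<forall>u\<in>verts G. \<forall>v\<in>verts G. {u, v} \<in> edges G \<longleftrightarrow> {f u, f v} \<in> edges H)"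

text \<open>Super X-set parameter (restricted to graphs whose vertices lie in a fixed type 'a).\<close>
definition super_X_param :: "('a graph \<Rightarrow> 'a set set) \<Rightarrow> bool" where
  "super_X_param X \<longleftrightarrow>
     (\<forall>G. is_graph G \<longrightarrow> X G \<subseteq> Pow (verts G)) \<and>
     (\<forall>G H f. is_graph G \<and> is_graph H \<and> graph_iso f G H \<longrightarrow>
         (\<forall>S\<in>X G. f ` S \<in> X H)) \<and>
     (\<forall>G. is_graph G \<longrightarrow> X G \<noteq> {}) \<and>
     (\<forall>G S S'. is_graph G \<and> S \<in> X G \<and> S \<subseteq> S' \<and> S' \<subseteq> verts G \<longrightarrow> S' \<in> X G)"

definition TAR_graph :: "('a graph \<Rightarrow> 'a set set) \<Rightarrow> 'a graph \<Rightarrow> 'a set graph" where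
  "TAR_graph X G = (X G, {{S1, S2} | S1 S2. S1 \<in> X G \<and> S2 \<in> X G \<and>
                          card ((S1 - S2) \<union> (S2 - S1)) = 1})"

definition adj_rel :: "'a graph \<Rightarrow> ('a \<times> 'a) set" where
  "adj_rel G = {(u, v). u \<in> verts G \<and> v \<in> verts G \<and> u \<noteq> v \<and> {u, v} \<in> edges G}"

definition connected_rel :: "'a graph \<Rightarrow> ('a \<times> 'a) set" where
  "connected_rel G = Id_on (verts G) \<union> (adj_rel G)\<^sup>+"

definition components :: "'a graph \<Rightarrow> 'a set set" where
  "components G = verts G // connected_rel G"

definition delete_vertex :: "'a graph \<Rightarrow> 'a \<Rightarrow> 'a graph" where
  "delete_vertex G v = (verts G - {v}, {e \<in> edges G. v \<notin> e})"

definition is_cut_vertex :: "'a graph \<Rightarrow> 'a \<Rightarrow> bool" where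
  "is_cut_vertex G v \<longleftrightarrow> v \<in> verts G \<and>
     card (components (delete_vertex G v)) > card (components G)"

end

theory Submission
  imports Defs
begin

text \<open>In the TAR graph every X-set \<open>T\<close> is joined to \<open>V(G)\<close> by adding the missing vertices one
at a time; by the superset property all intermediate sets are X-sets. If \<open>S \<noteq> V(G)\<close>, pick
\<open>a \<notin> S\<close>: from \<open>T \<noteq> S\<close> first add \<open>a\<close>, then the rest. Every set on this walk contains \<open>a\<close>, so
the walk avoids \<open>S\<close>. Hence both the TAR graph and the TAR graph minus \<open>S\<close> are connected, and \<open>S\<close>
is no cut-vertex.\<close>

lemma super_X_param_subset_verts:
  "super_X_param X \<Longrightarrow> is_graph G \<Longrightarrow> S \<in> X G \<Longrightarrow> S \<subseteq> verts G"
  unfolding super_X_param_def by (elim conjE) (metis PowD subsetD)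

lemma super_X_param_superset:
  "super_X_param X \<Longrightarrow> is_graph G \<Longrightarrow> S \<in> X G \<Longrightarrow> S \<subseteq> S' \<Longrightarrow> S' \<subseteq> verts G \<Longrightarrow> S' \<in> X G"
  unfolding super_X_param_def by (elim conjE) (metis (no_types, lifting))

lemma super_X_param_verts:
  assumes "super_X_param X" "is_graph G"
  shows "verts G \<in> X G"
proof -
  obtain S where "S \<in> X G"
    using assms unfolding super_X_param_def by (elim conjE) (metis ex_in_conv)
  then show ?thesis
    using super_X_param_superset[OF assms] super_X_param_subset_verts[OF assms] by blast
qed

lemma adj_rel_delete_vertex:
  "adj_rel (delete_vertex H v) = {(u, w) \<in> adj_rel H. u \<noteq> v \<and> w \<noteq> v}"
  unfolding adj_rel_def delete_vertex_def verts_def edges_def by auto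

lemma components_eq_singleton_if_rtrancl_to:
  assumes r: "r \<in> verts H" and reach: "\<And>x. x \<in> verts H \<Longrightarrow> (x, r) \<in> (adj_rel H)\<^sup>*"
  shows "components H = {verts H}"
proof -
  have sym_adj: "sym (adj_rel H)"
    unfolding adj_rel_def sym_def by (auto simp: insert_commute)
  have "adj_rel H \<subseteq> verts H \<times> verts H"
    unfolding adj_rel_def by auto
  then have conn_sub: "connected_rel H \<subseteq> verts H \<times> verts H"
    unfolding connected_rel_def using trancl_subset_Sigma by blast
  have class_eq: "connected_rel H `` {x} = verts H" if x: "x \<in> verts H" for x
  proof
    show "connected_rel H `` {x} \<subseteq> verts H"
      using conn_sub by blast
  next
    show "verts H \<subseteq> connected_rel H `` {x}"
    proof
      fix y assume y: "y \<in> verts H"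
      have "(r, y) \<in> (adj_rel H)\<^sup>*"
        using reach[OF y] sym_adj by (metis rtrancl_converseI sym_conv_converse_eq)
      with reach[OF x] have "(x, y) \<in> (adj_rel H)\<^sup>*"
        by (rule rtrancl_trans)
      then have "x = y \<or> (x, y) \<in> (adj_rel H)\<^sup>+"
        by (meson rtranclD)
      then show "y \<in> connected_rel H `` {x}"
        unfolding connected_rel_def using y by auto
    qed
  qed
  have "(\<Union>x\<in>verts H. {connected_rel H `` {x}}) = {verts H}"
    using class_eq r by blast
  then show ?thesis
    unfolding components_def quotient_def .
qed

lemma verts_TAR_graph: "verts (TAR_graph X G) = X G"
  by (simp add: TAR_graph_def verts_def)

lemma TAR_adj_insert:
  assumes U: "U \<in> X G" and xU: "insert x U \<in> X G" and x: "x \<notin> U"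
  shows "(U, insert x U) \<in> adj_rel (TAR_graph X G)"
proof -
  have "(U - insert x U) \<union> (insert x U - U) = {x}"
    using x by auto
  then have "card ((U - insert x U) \<union> (insert x U - U)) = 1"
    by simp
  then have "{U, insert x U} \<in> edges (TAR_graph X G)"
    unfolding TAR_graph_def edges_def snd_conv using U xU by blast
  moreover have "U \<noteq> insert x U"
    using x by auto
  ultimately show ?thesis
    unfolding adj_rel_def verts_TAR_graph using U xU by simp
qed

lemma TAR_rtrancl_superset:
  assumes X: "super_X_param X" and G: "is_graph G"
    and T: "T \<in> X G" and TU: "T \<subseteq> U" and U: "U \<subseteq> verts G"
  shows "(T, U) \<in> (Restr (adj_rel (TAR_graph X G)) {V. T \<subseteq> V})\<^sup>*"
proof -
  let ?R = "Restr (adj_rel (TAR_graph X G)) {V. T \<subseteq> V}"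
  have walk: "(T, T \<union> A) \<in> ?R\<^sup>*" if "finite A" "T \<union> A \<subseteq> verts G" for A
    using that
  proof (induction A rule: finite_induct)
    case empty
    then show ?case by simp
  next
    case (insert x A)
    then have IH: "(T, T \<union> A) \<in> ?R\<^sup>*" by simp
    show ?case
    proof (cases "x \<in> T \<union> A")
      case True
      then show ?thesis using IH by (simp add: insert_absorb)
    next
      case False
      have "T \<union> A \<in> X G" "insert x (T \<union> A) \<in> X G"
        by (rule super_X_param_superset[OF X G T]; use insert.prems in auto)+
      then have "(T \<union> A, insert x (T \<union> A)) \<in> ?R"
        using TAR_adj_insert[of "T \<union> A" X G x] False by auto
      with IH have "(T, insert x (T \<union> A)) \<in> ?R\<^sup>*" ..
      then show ?thesis by simp
    qed
  qed
  have "finite (U - T)"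
    using G U finite_subset unfolding is_graph_def by blast
  moreover have "T \<union> (U - T) = U"
    using TU by blast
  ultimately show ?thesis
    using walk[of "U - T"] U by simp
qed

lemma TAR_rtrancl_verts:
  assumes "super_X_param X" "is_graph G" "T \<in> X G"
  shows "(T, verts G) \<in> (adj_rel (TAR_graph X G))\<^sup>*"
proof -
  have "Restr (adj_rel (TAR_graph X G)) {V. T \<subseteq> V} \<subseteq> adj_rel (TAR_graph X G)"
    by blast
  from rtrancl_mono[OF this]
    TAR_rtrancl_superset[OF assms super_X_param_subset_verts[OF assms] order.refl]
  show ?thesis ..
qed

lemma TAR_delete_rtrancl_verts:
  assumes X: "super_X_param X" and G: "is_graph G" and T: "T \<in> X G" "T \<noteq> S"
    and a: "a \<in> verts G" "a \<notin> S"
  shows "(T, verts G) \<in> (adj_rel (delete_vertex (TAR_graph X G) S))\<^sup>*"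
proof -
  let ?R = "adj_rel (delete_vertex (TAR_graph X G) S)"
  have aT: "insert a T \<in> X G"
    using super_X_param_superset[OF X G T(1)] super_X_param_subset_verts[OF X G T(1)] a by blast
  have "(T, insert a T) \<in> ?R\<^sup>*"
  proof (cases "a \<in> T")
    case False
    have "(T, insert a T) \<in> adj_rel (TAR_graph X G)"
      using TAR_adj_insert[of T X G a] T(1) aT False by blast
    then have "(T, insert a T) \<in> ?R"
      unfolding adj_rel_delete_vertex using T(2) a(2) by blast
    then show ?thesis by blast
  qed (simp add: insert_absorb)
  moreover have "(insert a T, verts G) \<in> ?R\<^sup>*"
  proof -
    have "Restr (adj_rel (TAR_graph X G)) {V. insert a T \<subseteq> V} \<subseteq> ?R"
      unfolding adj_rel_delete_vertex using a by auto
    from rtrancl_mono[OF this]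
      TAR_rtrancl_superset[OF X G aT super_X_param_subset_verts[OF X G aT] order.refl]
    show ?thesis ..
  qed
  ultimately show ?thesis by (rule rtrancl_trans)
qed

theorem proposition2p43:
  fixes X :: "'a graph \<Rightarrow> 'a set set" and G :: "'a graph" and S :: "'a set"
  assumes "super_X_param X"
    and "is_graph G"
    and "S \<in> X G"
    and "is_cut_vertex (TAR_graph X G) S"
  shows "S = verts G"
proof (rule ccontr)
  assume "S \<noteq> verts G"
  then obtain a where a: "a \<in> verts G" "a \<notin> S"
    using super_X_param_subset_verts[OF assms(1-3)] by blast
  have V: "verts G \<in> X G"
    using super_X_param_verts[OF assms(1,2)] .
  have "components (TAR_graph X G) = {X G}"
    using components_eq_singleton_if_rtrancl_to[of "verts G" "TAR_graph X G"]
      TAR_rtrancl_verts[OF assms(1,2)] V by (simp add: verts_TAR_graph)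
  moreover have "components (delete_vertex (TAR_graph X G) S) = {X G - {S}}"
  proof -
    have "verts (delete_vertex (TAR_graph X G) S) = X G - {S}"
      by (simp add: delete_vertex_def verts_def flip: verts_TAR_graph)
    then show ?thesis
      using components_eq_singleton_if_rtrancl_to[of "verts G" "delete_vertex (TAR_graph X G) S"]
        TAR_delete_rtrancl_verts[OF assms(1,2) _ _ a] V a by auto
  qed
  ultimately show False
    using assms(4) unfolding is_cut_vertex_def by simp
qed

end
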